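(* Let $n\geq 2$ and let $\Omega\subset\mathbb R^n$ be a bounded convex domain with $0\in\partial\Omega$ and $\Omega\subset\{x=(x',x_n)\in\mathbb R^n: x_n>0\}$. For $\alpha\in(0,1)$ define on $\Omega$ $$v_\alpha(x)=x_n^{\alpha}\,(|x'|^2-C_\alpha),\qquad C_\alpha=\frac{1+2[\mathrm{diam}\,\Omega]^2}{\alpha(1-\alpha)}.$$ Then: (i) $v_\alpha$ is convex in $\Omega$, $v_\alpha\leq 0$ on $\partial\Omega$, and $\det D^2 v_\alpha(x)\geq 2x_n^{n\alpha-2}$ for all $x\in\Omega$; (ii) if $p>0$, then $\det D^2 v_{\frac{2}{n+p}}>|v_{\frac{2}{n+p}}|^{-p}$ in $\Omega$.
   Context: Points of $\mathbb R^n$ are written $x=(x',x_n)$ with $x'\in\mathbb R^{n-1}$; $\mathrm{diam}\,\Omega$ is the diameter of $\Omega$. *)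

theory Defs
  imports "HOL-Analysis.Analysis"
begin

definition partial :: "'n::finite \<Rightarrow> (real^'n \<Rightarrow> real) \<Rightarrow> real^'n \<Rightarrow> real" where
  "partial i f x = deriv (\<lambda>t. f (x + t *\<^sub>R axis i 1)) 0"

definition hessian :: "(real^'n::finite \<Rightarrow> real) \<Rightarrow> real^'n \<Rightarrow> real^'n^'n" where
  "hessian f x = (\<chi> i j. partial i (partial j f) x)"

definition C_alpha :: "(real^'n::finite) set \<Rightarrow> real \<Rightarrow> real" where
  "C_alpha \<Omega> \<alpha> = (1 + 2 * (diameter \<Omega>)\<^sup>2) / (\<alpha> * (1 - \<alpha>))"

text \<open>v_alpha(x) = x_n^alpha (|x'|^2 - C_alpha), where the coordinate k plays the role of x_n
  and x' consists of all other coordinates.\<close>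
definition v_alpha :: "(real^'n::finite) set \<Rightarrow> 'n \<Rightarrow> real \<Rightarrow> real^'n \<Rightarrow> real" where
  "v_alpha \<Omega> k \<alpha> x = (x $ k) powr \<alpha> * ((\<Sum>i\<in>UNIV - {k}. (x $ i)\<^sup>2) - C_alpha \<Omega> \<alpha>)"

end

theory Submission
  imports Defs
begin

(* Restricted to a segment, v_alpha is u^alpha w with u = x_n affine and positive and
  w = |x'|^2 - C_alpha quadratic. Completing a square bounds its second derivative below by
  b^2 u^(alpha-2) M, where b is the slope of u and
  M = alpha (1-alpha) (C_alpha - |x'|^2) - 2 alpha^2 |x'|^2.
  As 0 lies in the closure of Omega, |x'| <= diam Omega there, and the choice of C_alpha
  makes M >= 1. Off the x_n row and column the Hessian is 2 x_n^alpha times the identity,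
  so eliminating that row gives det D^2 v_alpha = 2^(n-1) x_n^(n alpha - 2) M.
  For alpha = 2/(n+p) one has x_n^(n alpha - 2) = (x_n^alpha)^(-p), while
  |v_alpha| = x_n^alpha (C_alpha - |x'|^2) with the last factor > 1. *)

abbreviation sq_norm_except :: "'n::finite \<Rightarrow> real^'n \<Rightarrow> real" where
  "sq_norm_except k x \<equiv> \<Sum>l\<in>UNIV - {k}. (x $ l)\<^sup>2"

lemma det_arrow_eliminate_row:
  fixes A :: "real^'n^'n"
  assumes a: "a \<noteq> 0"
    and block: "\<And>i j. i \<noteq> k \<Longrightarrow> j \<noteq> k \<Longrightarrow> A$i$j = (if i = j then a else 0)"
  shows "det A = det (\<chi> i j. if i = k then (if j = k then A$k$k - (\<Sum>l\<in>UNIV-{k}. A$k$l * A$l$k / a) else 0)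
                             else A$i$j)"
proof -
  define x where "x = (\<Sum>l\<in>UNIV-{k}. (- (A$k$l / a)) *s row l A)"
  have x_span: "x \<in> vec.span {row j A |j. j \<noteq> k}"
    unfolding x_def by (intro vec.span_sum vec.span_scale vec.span_base) auto
  have x_comp: "x $ j = (\<Sum>l\<in>UNIV-{k}. - (A$k$l / a) * A$l$j)" for j
    unfolding x_def by (simp add: sum_component row_def)
  have x_off: "x $ j = - A$k$j" if "j \<noteq> k" for j
  proof -
    have "x $ j = (\<Sum>l\<in>UNIV-{k}. if l = j then - (A$k$l / a) * a else 0)"
      unfolding x_comp by (rule sum.cong) (use that block in auto)
    then show ?thesis using that a by (simp add: sum.delta)
  qed
  have "(\<chi> i. if i = k then row k A + x else row i A)
      = (\<chi> i j. if i = k then (if j = k then A$k$k - (\<Sum>l\<in>UNIV-{k}. A$k$l * A$l$k / a) else 0)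
                else A$i$j)"
    by (simp add: vec_eq_iff row_def x_off) (simp add: x_comp sum_negf)
  then show ?thesis using det_row_span[OF x_span] by simp
qed

lemma det_arrow:
  fixes A :: "real^'n^'n"
  assumes a: "a \<noteq> 0"
    and block: "\<And>i j. i \<noteq> k \<Longrightarrow> j \<noteq> k \<Longrightarrow> A$i$j = (if i = j then a else 0)"
  shows "det A = a ^ (CARD('n) - 1) * (A$k$k - (\<Sum>l\<in>UNIV-{k}. A$k$l * A$l$k / a))"
proof -
  define s where "s = A$k$k - (\<Sum>l\<in>UNIV-{k}. A$k$l * A$l$k / a)"
  define M where "M = (\<chi> i j. if i = k then (if j = k then s else 0) else A$i$j)"
  have "det A = det M"
    unfolding M_def s_def by (rule det_arrow_eliminate_row[OF a block])
  also have "\<dots> = det (transpose M)" by simp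
  also have "\<dots> = det (\<chi> i j. if i = k then (if j = k then transpose M$k$k
                 - (\<Sum>l\<in>UNIV-{k}. transpose M$k$l * transpose M$l$k / a) else 0) else transpose M$i$j)"
    by (rule det_arrow_eliminate_row[OF a]) (use block in \<open>auto simp: M_def transpose_def\<close>)
  also have "(\<chi> i j. if i = k then (if j = k then transpose M$k$k
                 - (\<Sum>l\<in>UNIV-{k}. transpose M$k$l * transpose M$l$k / a) else 0) else transpose M$i$j)
      = (\<chi> i j. if i = j then (if i = k then s else a) else 0)"
    by (simp add: vec_eq_iff M_def transpose_def block)
  also have "det \<dots> = (\<Prod>i\<in>UNIV. if i = k then s else a)"
    by (subst det_diagonal) auto
  also have "\<dots> = a ^ (CARD('n) - 1) * s"
    by (simp add: prod.If_cases Int_absorb1 Compl_eq_Diff_UNIV card_Diff_singleton)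
  finally show ?thesis by (simp add: s_def)
qed

lemma sq_norm_except_add_axis:
  "sq_norm_except k (x + t *\<^sub>R axis i 1) = sq_norm_except k x + (if i = k then 0 else 2*t*x$i + t\<^sup>2)"
proof -
  have "sq_norm_except k (x + t *\<^sub>R axis i 1)
      = (\<Sum>l\<in>UNIV-{k}. (x$l)\<^sup>2 + (if l = i then 2*t*x$i + t\<^sup>2 else 0))"
    by (rule sum.cong) (auto simp: axis_def power2_eq_square algebra_simps)
  then show ?thesis by (simp add: sum.distrib sum.delta)
qed

definition grad_v_alpha :: "(real^'n::finite) set \<Rightarrow> 'n \<Rightarrow> real \<Rightarrow> 'n \<Rightarrow> real^'n \<Rightarrow> real" where
  "grad_v_alpha \<Omega> k \<alpha> j y =
    (if j = k then \<alpha> * (y$k) powr (\<alpha>-1) * (sq_norm_except k y - C_alpha \<Omega> \<alpha>)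
     else 2 * (y$k) powr \<alpha> * y$j)"

lemma has_real_derivative_v_alpha_along_axis:
  assumes "0 < x$k"
  shows "((\<lambda>t. v_alpha \<Omega> k \<alpha> (x + t *\<^sub>R axis j 1)) has_real_derivative grad_v_alpha \<Omega> k \<alpha> j x) (at 0)"
proof (cases "j = k")
  case True
  then have "(\<lambda>t. v_alpha \<Omega> k \<alpha> (x + t *\<^sub>R axis j 1))
      = (\<lambda>t. (x$k + t) powr \<alpha> * (sq_norm_except k x - C_alpha \<Omega> \<alpha>))"
    by (simp only: v_alpha_def sq_norm_except_add_axis) (simp add: axis_def)
  moreover have "((\<lambda>t. (x$k + t) powr \<alpha> * (sq_norm_except k x - C_alpha \<Omega> \<alpha>)) has_real_derivative
      (\<alpha> * (x$k + 0) powr (\<alpha> - of_nat 1) * 1) * (sq_norm_except k x - C_alpha \<Omega> \<alpha>)) (at 0)"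
    by (intro DERIV_cmult_right DERIV_fun_powr derivative_eq_intros) (use assms in auto)
  ultimately show ?thesis using True by (simp add: grad_v_alpha_def)
next
  case False
  then have "(\<lambda>t. v_alpha \<Omega> k \<alpha> (x + t *\<^sub>R axis j 1))
      = (\<lambda>t. (x$k) powr \<alpha> * (sq_norm_except k x + (2*t*x$j + t\<^sup>2) - C_alpha \<Omega> \<alpha>))"
    by (simp only: v_alpha_def sq_norm_except_add_axis) (simp add: axis_def)
  moreover have "((\<lambda>t. (x$k) powr \<alpha> * (sq_norm_except k x + (2*t*x$j + t\<^sup>2) - C_alpha \<Omega> \<alpha>))
      has_real_derivative (x$k) powr \<alpha> * (2 * x$j)) (at 0)"
    by (auto intro!: derivative_eq_intros)
  ultimately show ?thesis using False by (simp add: grad_v_alpha_def mult_ac)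
qed

lemma partial_v_alpha:
  "0 < x$k \<Longrightarrow> partial j (v_alpha \<Omega> k \<alpha>) x = grad_v_alpha \<Omega> k \<alpha> j x"
  unfolding partial_def by (rule DERIV_imp_deriv[OF has_real_derivative_v_alpha_along_axis])

lemma has_real_derivative_grad_v_alpha_along_axis:
  assumes "0 < x$k"
  shows "((\<lambda>t. grad_v_alpha \<Omega> k \<alpha> j (x + t *\<^sub>R axis i 1)) has_real_derivative
    (if i = k \<and> j = k then \<alpha>*(\<alpha>-1) * (x$k) powr (\<alpha>-2) * (sq_norm_except k x - C_alpha \<Omega> \<alpha>)
     else if i = k then 2*\<alpha> * (x$k) powr (\<alpha>-1) * x$j
     else if j = k then 2*\<alpha> * (x$k) powr (\<alpha>-1) * x$i
     else if i = j then 2 * (x$k) powr \<alpha> else 0)) (at 0)"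
proof -
  define S where "S = sq_norm_except k x"
  define C where "C = C_alpha \<Omega> \<alpha>"
  consider "i = k" "j = k" | "i \<noteq> k" "j = k" | "i = k" "j \<noteq> k" | "i \<noteq> k" "j \<noteq> k" by blast
  then show ?thesis
  proof cases
    case 1
    then have "(\<lambda>t. grad_v_alpha \<Omega> k \<alpha> j (x + t *\<^sub>R axis i 1)) = (\<lambda>t. \<alpha> * ((x$k + t) powr (\<alpha>-1) * (S - C)))"
      by (simp only: grad_v_alpha_def sq_norm_except_add_axis) (simp add: axis_def S_def C_def mult.assoc)
    moreover have "((\<lambda>t. \<alpha> * ((x$k + t) powr (\<alpha>-1) * (S - C))) has_real_derivative
        \<alpha> * (((\<alpha>-1) * (x$k + 0) powr (\<alpha> - 1 - of_nat 1) * 1) * (S - C))) (at 0)"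
      by (intro DERIV_cmult DERIV_cmult_right DERIV_fun_powr derivative_eq_intros) (use assms in auto)
    ultimately show ?thesis using 1 by (simp add: S_def C_def mult.assoc)
  next
    case 2
    then have "(\<lambda>t. grad_v_alpha \<Omega> k \<alpha> j (x + t *\<^sub>R axis i 1))
        = (\<lambda>t. \<alpha> * (x$k) powr (\<alpha>-1) * (S + (2*t*x$i + t\<^sup>2) - C))"
      by (simp only: grad_v_alpha_def sq_norm_except_add_axis) (simp add: axis_def S_def C_def mult.assoc)
    moreover have "((\<lambda>t. \<alpha> * (x$k) powr (\<alpha>-1) * (S + (2*t*x$i + t\<^sup>2) - C)) has_real_derivative
        \<alpha> * (x$k) powr (\<alpha>-1) * (2 * x$i)) (at 0)"
      by (auto intro!: derivative_eq_intros)
    ultimately show ?thesis using 2 by (simp add: mult_ac)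
  next
    case 3
    then have "(\<lambda>t. grad_v_alpha \<Omega> k \<alpha> j (x + t *\<^sub>R axis i 1)) = (\<lambda>t. 2 * ((x$k + t) powr \<alpha> * x$j))"
      by (simp add: grad_v_alpha_def axis_def mult.assoc)
    moreover have "((\<lambda>t. 2 * ((x$k + t) powr \<alpha> * x$j)) has_real_derivative
        2 * ((\<alpha> * (x$k + 0) powr (\<alpha> - of_nat 1) * 1) * x$j)) (at 0)"
      by (intro DERIV_cmult DERIV_cmult_right DERIV_fun_powr derivative_eq_intros) (use assms in auto)
    ultimately show ?thesis using 3 by (simp add: mult_ac)
  next
    case 4
    then have "(\<lambda>t. grad_v_alpha \<Omega> k \<alpha> j (x + t *\<^sub>R axis i 1))
        = (\<lambda>t. 2 * (x$k) powr \<alpha> * x$j + (if i = j then 2 * (x$k) powr \<alpha> * t else 0))"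
      by (auto simp: grad_v_alpha_def axis_def algebra_simps)
    moreover have "((\<lambda>t. 2 * (x$k) powr \<alpha> * x$j + (if i = j then 2 * (x$k) powr \<alpha> * t else 0))
        has_real_derivative (if i = j then 2 * (x$k) powr \<alpha> else 0)) (at 0)"
      by (cases "i = j") (auto intro!: derivative_eq_intros)
    ultimately show ?thesis using 4 by simp
  qed
qed

lemma hessian_v_alpha:
  assumes "0 < x$k"
  shows "hessian (v_alpha \<Omega> k \<alpha>) x $ i $ j =
    (if i = k \<and> j = k then \<alpha>*(\<alpha>-1) * (x$k) powr (\<alpha>-2) * (sq_norm_except k x - C_alpha \<Omega> \<alpha>)
     else if i = k then 2*\<alpha> * (x$k) powr (\<alpha>-1) * x$j
     else if j = k then 2*\<alpha> * (x$k) powr (\<alpha>-1) * x$i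
     else if i = j then 2 * (x$k) powr \<alpha> else 0)"
proof -
  have "partial j (v_alpha \<Omega> k \<alpha>) (x + t *\<^sub>R axis i 1) = grad_v_alpha \<Omega> k \<alpha> j (x + t *\<^sub>R axis i 1)"
    if "t \<in> {-(x$k)<..}" for t
    using that assms by (intro partial_v_alpha) (auto simp: axis_def)
  then have "((\<lambda>t. partial j (v_alpha \<Omega> k \<alpha>) (x + t *\<^sub>R axis i 1)) has_real_derivative
    (if i = k \<and> j = k then \<alpha>*(\<alpha>-1) * (x$k) powr (\<alpha>-2) * (sq_norm_except k x - C_alpha \<Omega> \<alpha>)
     else if i = k then 2*\<alpha> * (x$k) powr (\<alpha>-1) * x$j
     else if j = k then 2*\<alpha> * (x$k) powr (\<alpha>-1) * x$i
     else if i = j then 2 * (x$k) powr \<alpha> else 0)) (at 0)"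
    by (intro has_field_derivative_transform_within_open[OF has_real_derivative_grad_v_alpha_along_axis[OF assms],
          of "{-(x$k)<..}"]) (use assms in auto)
  then show ?thesis unfolding hessian_def partial_def by (simp add: DERIV_imp_deriv)
qed

lemma det_hessian_v_alpha:
  fixes x :: "real^'n"
  assumes pos: "0 < x$k"
  shows "det (hessian (v_alpha \<Omega> k \<alpha>) x) = 2 ^ (CARD('n) - 1) * (x$k) powr (real CARD('n) * \<alpha> - 2)
           * (\<alpha>*(1-\<alpha>)*(C_alpha \<Omega> \<alpha> - sq_norm_except k x) - 2*\<alpha>\<^sup>2* sq_norm_except k x)"
proof -
  define t where "t = x$k"
  define A where "A = sq_norm_except k x"
  define C where "C = C_alpha \<Omega> \<alpha>"
  define P where "P = t powr (\<alpha> - 2)"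
  define H where "H = hessian (v_alpha \<Omega> k \<alpha>) x"
  define a where "a = 2 * P * t * t"
  have t: "0 < t" using pos by (simp add: t_def)
  then have P: "0 < P" by (simp add: P_def)
  have P1: "t powr (\<alpha>-1) = P * t"
    using t powr_add[of t "\<alpha>-2" 1] by (simp add: P_def)
  have P0: "t powr \<alpha> = P * t * t"
    using t powr_add[of t "\<alpha>-2" 2] by (simp add: P_def power2_eq_square mult.assoc)
  have H: "H $ i $ j = (if i = k \<and> j = k then \<alpha>*(\<alpha>-1) * P * (A - C)
     else if i = k then 2*\<alpha> * P * t * x$j
     else if j = k then 2*\<alpha> * P * t * x$i
     else if i = j then a else 0)" for i j
    using hessian_v_alpha[OF pos, of \<Omega> \<alpha> i j]
    by (simp add: H_def a_def P_def[symmetric] t_def[symmetric] A_def C_def P1 P0 mult.assoc)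
  have "a \<noteq> 0" using P t by (simp add: a_def)
  then have "det H = a ^ (CARD('n) - 1) * (H$k$k - (\<Sum>l\<in>UNIV-{k}. H$k$l * H$l$k / a))"
    by (rule det_arrow) (simp add: H)
  also have "(\<Sum>l\<in>UNIV-{k}. H$k$l * H$l$k / a) = (\<Sum>l\<in>UNIV-{k}. 2 * \<alpha>\<^sup>2 * P * (x$l)\<^sup>2)"
    by (rule sum.cong) (use P t in \<open>auto simp: H a_def power2_eq_square field_simps\<close>)
  also have "\<dots> = 2 * \<alpha>\<^sup>2 * P * A" by (simp add: A_def sum_distrib_left)
  finally have "det H = (2 * t powr \<alpha>) ^ (CARD('n) - 1) * P * (\<alpha>*(1-\<alpha>)*(C - A) - 2*\<alpha>\<^sup>2*A)"
    by (simp add: H P0 a_def algebra_simps)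
  also have "(2 * t powr \<alpha>) ^ (CARD('n) - 1) * P = 2 ^ (CARD('n) - 1) * t powr (real CARD('n) * \<alpha> - 2)"
  proof -
    have "(2 * t powr \<alpha>) ^ (CARD('n) - 1) * P = 2 ^ (CARD('n) - 1) * t powr (real (CARD('n) - 1) * \<alpha> + (\<alpha> - 2))"
      using t by (simp add: power_mult_distrib powr_power P_def powr_add)
    also have "real (CARD('n) - 1) * \<alpha> + (\<alpha> - 2) = real CARD('n) * \<alpha> - 2"
      by (simp add: algebra_simps)
    finally show ?thesis .
  qed
  finally show ?thesis by (simp add: H_def t_def A_def C_def)
qed

lemma norm_le_diameter_closure:
  fixes x :: "'a::real_normed_vector"
  assumes "bounded S" "0 \<in> closure S" "x \<in> closure S"
  shows "norm x \<le> diameter S"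
proof -
  have "dist x 0 \<le> diameter (closure S)"
    using assms by (intro diameter_bounded_bound) auto
  then show ?thesis using diameter_closure[OF assms(1)] by simp
qed

lemma sq_norm_except_le_norm: "sq_norm_except k x \<le> (norm x)\<^sup>2"
proof -
  have "sq_norm_except k x \<le> (\<Sum>l\<in>UNIV. (x$l)\<^sup>2)" by (rule sum_mono2) auto
  also have "\<dots> = (norm x)\<^sup>2"
    unfolding power2_norm_eq_inner by (simp add: inner_vec_def power2_eq_square)
  finally show ?thesis .
qed

lemma sq_norm_except_le_diameter:
  assumes "bounded S" "0 \<in> closure S" "x \<in> closure S"
  shows "sq_norm_except k x \<le> (diameter S)\<^sup>2"
proof -
  have "(norm x)\<^sup>2 \<le> (diameter S)\<^sup>2"
    using norm_le_diameter_closure[OF assms] by (simp add: power_mono)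
  with sq_norm_except_le_norm show ?thesis by (rule order_trans)
qed

lemma C_alpha_margin:
  fixes A :: real
  assumes \<alpha>: "0 < \<alpha>" "\<alpha> < 1" and A: "0 \<le> A" "A \<le> (diameter \<Omega>)\<^sup>2"
  shows "1 \<le> \<alpha>*(1-\<alpha>)*(C_alpha \<Omega> \<alpha> - A) - 2*\<alpha>\<^sup>2*A"
proof -
  have "\<alpha>*(1-\<alpha>)*C_alpha \<Omega> \<alpha> = 1 + 2*(diameter \<Omega>)\<^sup>2"
    using \<alpha> by (simp add: C_alpha_def)
  moreover have "(\<alpha> + \<alpha>\<^sup>2) * A \<le> 2 * (diameter \<Omega>)\<^sup>2"
  proof -
    have "\<alpha> + \<alpha>\<^sup>2 \<le> 2" using \<alpha> by (simp add: power2_eq_square) (smt (verit) mult_left_le_one_le)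
    then show ?thesis using A mult_mono[of "\<alpha> + \<alpha>\<^sup>2" 2 A "(diameter \<Omega>)\<^sup>2"] by simp
  qed
  ultimately show ?thesis by (simp add: algebra_simps power2_eq_square)
qed

lemma C_alpha_gap:
  fixes A :: real
  assumes \<alpha>: "0 < \<alpha>" "\<alpha> < 1" and A: "0 \<le> A" "A \<le> (diameter \<Omega>)\<^sup>2"
  shows "1 < C_alpha \<Omega> \<alpha> - A"
proof -
  have quarter: "\<alpha>*(1-\<alpha>) \<le> 1/4"
    using zero_le_power2[of "2*\<alpha> - 1"] by (simp add: power2_eq_square algebra_simps)
  have margin: "1 \<le> \<alpha>*(1-\<alpha>)*(C_alpha \<Omega> \<alpha> - A)"
    using C_alpha_margin[OF assms] \<open>0 \<le> A\<close> zero_le_power2[of \<alpha>] by (smt (verit) mult_nonneg_nonneg)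
  have "0 < \<alpha>*(1-\<alpha>)" using \<alpha> by simp
  then have "0 < C_alpha \<Omega> \<alpha> - A"
    using zero_less_mult_pos[of "\<alpha>*(1-\<alpha>)" "C_alpha \<Omega> \<alpha> - A"] margin by linarith
  then have "\<alpha>*(1-\<alpha>)*(C_alpha \<Omega> \<alpha> - A) \<le> (1/4) * (C_alpha \<Omega> \<alpha> - A)"
    by (intro mult_right_mono[OF quarter]) simp
  with margin have "1 \<le> (1/4) * (C_alpha \<Omega> \<alpha> - A)" by (rule order_trans)
  then show ?thesis by simp
qed

lemma det_hessian_v_alpha_ge:
  fixes x :: "real^'n"
  assumes n: "2 \<le> CARD('n)" and pos: "0 < x$k"
    and margin: "1 \<le> \<alpha>*(1-\<alpha>)*(C_alpha \<Omega> \<alpha> - sq_norm_except k x) - 2*\<alpha>\<^sup>2 * sq_norm_except k x"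
  shows "2 * (x$k) powr (real CARD('n) * \<alpha> - 2) \<le> det (hessian (v_alpha \<Omega> k \<alpha>) x)"
proof -
  define T where "T = (x$k) powr (real CARD('n) * \<alpha> - 2)"
  have "(2::real) ^ 1 \<le> 2 ^ (CARD('n) - 1)"
    by (rule power_increasing) (use n in auto)
  then have "2 * T \<le> 2 ^ (CARD('n) - 1) * T * 1"
    by (simp add: T_def mult_right_mono)
  also have "\<dots> \<le> 2 ^ (CARD('n) - 1) * T * (\<alpha>*(1-\<alpha>)*(C_alpha \<Omega> \<alpha> - sq_norm_except k x) - 2*\<alpha>\<^sup>2 * sq_norm_except k x)"
    using margin by (intro mult_left_mono) (auto simp: T_def)
  finally show ?thesis by (simp add: det_hessian_v_alpha[OF pos] T_def)
qed

lemma abs_v_alpha_powr_less: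
  fixes x :: "real^'n"
  assumes p: "0 < p" and pos: "0 < x$k" and gap: "1 < C_alpha \<Omega> \<alpha> - sq_norm_except k x"
    and \<alpha>: "\<alpha> = 2 / (real CARD('n) + p)"
  shows "\<bar>v_alpha \<Omega> k \<alpha> x\<bar> powr (- p) < (x$k) powr (real CARD('n) * \<alpha> - 2)"
proof -
  have exponent: "real CARD('n) * \<alpha> - 2 = \<alpha> * (- p)"
    using p by (simp add: \<alpha> field_simps)
  have "\<bar>v_alpha \<Omega> k \<alpha> x\<bar> = (x$k) powr \<alpha> * (C_alpha \<Omega> \<alpha> - sq_norm_except k x)"
    using gap by (simp add: v_alpha_def abs_mult)
  then have "\<bar>v_alpha \<Omega> k \<alpha> x\<bar> powr (- p)
      = (x$k) powr (real CARD('n) * \<alpha> - 2) * (C_alpha \<Omega> \<alpha> - sq_norm_except k x) powr (- p)"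
    using gap pos by (simp add: powr_mult powr_powr exponent)
  also have "\<dots> < (x$k) powr (real CARD('n) * \<alpha> - 2) * 1"
    using gap p pos by (intro mult_strict_left_mono powr_less_one) auto
  finally show ?thesis by simp
qed

lemma convex_on_affine_powr_mult:
  fixes w w' :: "real \<Rightarrow> real"
  assumes "convex I"
    and pos: "\<And>s. s \<in> I \<Longrightarrow> 0 < a + s*b"
    and w: "\<And>s. (w has_real_derivative w' s) (at s)"
    and w': "\<And>s. (w' has_real_derivative w'') (at s)"
    and nonneg: "\<And>s. s \<in> I \<Longrightarrow> 0 \<le> \<alpha>*(\<alpha>-1)*b\<^sup>2*w s + 2*\<alpha>*b*(a + s*b)*w' s + (a + s*b)\<^sup>2*w''"
  shows "convex_on I (\<lambda>s. (a + s*b) powr \<alpha> * w s)"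
proof -
  define u where "u s = a + s*b" for s
  define f' where "f' s = \<alpha>*b * (u s powr (\<alpha>-1) * w s) + u s powr \<alpha> * w' s" for s
  define f'' where "f'' s = \<alpha>*b * ((\<alpha>-1) * u s powr (\<alpha>-1-1) * b * w s + u s powr (\<alpha>-1) * w' s)
      + (\<alpha> * u s powr (\<alpha>-1) * b * w' s + u s powr \<alpha> * w'')" for s
  have u: "(u has_real_derivative b) (at s)" for s
    unfolding u_def by (auto intro!: derivative_eq_intros)
  have "((\<lambda>s. u s powr \<alpha> * w s) has_real_derivative f' s) (at s)" if "s \<in> I" for s
    by (rule DERIV_cong[OF DERIV_mult'[OF DERIV_fun_powr[OF u] w]])
       (use pos[OF that] in \<open>auto simp: u_def f'_def algebra_simps\<close>)
  moreover have "(f' has_real_derivative f'' s) (at s)" if "s \<in> I" for s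
    unfolding f'_def[abs_def] f''_def
    by (rule DERIV_cong[OF DERIV_add[OF DERIV_cmult[OF DERIV_mult'[OF DERIV_fun_powr[OF u] w]]
                                         DERIV_mult'[OF DERIV_fun_powr[OF u] w']]])
       (use pos[OF that] in \<open>auto simp: u_def\<close>)
  moreover have "0 \<le> f'' s" if "s \<in> I" for s
  proof -
    have "0 < u s" using pos that by (simp add: u_def)
    then have "f'' s = u s powr (\<alpha>-2) * (\<alpha>*(\<alpha>-1)*b\<^sup>2*w s + 2*\<alpha>*b*u s*w' s + (u s)\<^sup>2*w'')"
      by (simp add: f''_def powr_diff powr_add power2_eq_square field_simps)
    then show ?thesis using nonneg[OF that] by (simp add: u_def)
  qed
  ultimately have "convex_on I (\<lambda>s. u s powr \<alpha> * w s)"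
    by (rule f''_ge0_imp_convex[OF \<open>convex I\<close>])
  then show ?thesis by (simp add: u_def)
qed

lemma convex_on_affine_powr_mult_sum_squares:
  fixes p q :: "'a \<Rightarrow> real"
  assumes "finite L" "convex I"
    and pos: "\<And>s. s \<in> I \<Longrightarrow> 0 < a + s*b"
    and margin: "\<And>s. s \<in> I \<Longrightarrow>
      2*\<alpha>\<^sup>2 * (\<Sum>l\<in>L. (p l + s*q l)\<^sup>2) \<le> \<alpha>*(1-\<alpha>)*(C - (\<Sum>l\<in>L. (p l + s*q l)\<^sup>2))"
  shows "convex_on I (\<lambda>s. (a + s*b) powr \<alpha> * ((\<Sum>l\<in>L. (p l + s*q l)\<^sup>2) - C))"
proof (rule convex_on_affine_powr_mult[OF \<open>convex I\<close> pos])
  show "((\<lambda>s. (\<Sum>l\<in>L. (p l + s*q l)\<^sup>2) - C) has_real_derivative (\<Sum>l\<in>L. 2 * (p l + s*q l) * q l)) (at s)"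
    for s using \<open>finite L\<close> by (auto intro!: derivative_eq_intros simp: power2_eq_square algebra_simps)
  show "((\<lambda>s. \<Sum>l\<in>L. 2 * (p l + s*q l) * q l) has_real_derivative (\<Sum>l\<in>L. 2 * q l * q l)) (at s)"
    for s using \<open>finite L\<close> by (auto intro!: derivative_eq_intros simp: algebra_simps)
next
  fix s assume s: "s \<in> I"
  define y where "y l = p l + s*q l" for l
  define u where "u = a + s*b"
  define A where "A = (\<Sum>l\<in>L. (y l)\<^sup>2)"
  define B where "B = (\<Sum>l\<in>L. y l * q l)"
  define D where "D = (\<Sum>l\<in>L. q l * q l)"
  have "0 \<le> (\<Sum>l\<in>L. (u * q l + \<alpha> * b * y l)\<^sup>2)" by (intro sum_nonneg) auto
  also have "\<dots> = u\<^sup>2 * D + 2 * \<alpha> * u * b * B + \<alpha>\<^sup>2 * b\<^sup>2 * A"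
    by (simp add: A_def B_def D_def power2_eq_square algebra_simps sum.distrib sum_distrib_left)
  finally have square: "0 \<le> u\<^sup>2 * D + 2 * \<alpha> * u * b * B + \<alpha>\<^sup>2 * b\<^sup>2 * A" .
  have "0 \<le> b\<^sup>2 * (\<alpha>*(1-\<alpha>)*(C - A) - 2*\<alpha>\<^sup>2 * A)"
    using margin[OF s] by (simp add: A_def y_def)
  with square have "0 \<le> \<alpha>*(\<alpha>-1)*b\<^sup>2*(A - C) + 2*\<alpha>*b*u*(2*B) + u\<^sup>2*(2*D)"
    by (simp add: algebra_simps power2_eq_square)
  then show "0 \<le> \<alpha>*(\<alpha>-1)*b\<^sup>2*((\<Sum>l\<in>L. (p l + s*q l)\<^sup>2) - C)
      + 2*\<alpha>*b*(a + s*b)*(\<Sum>l\<in>L. 2 * (p l + s*q l) * q l) + (a + s*b)\<^sup>2*(\<Sum>l\<in>L. 2 * q l * q l)"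
    by (simp add: A_def B_def D_def y_def u_def sum_distrib_left mult_ac)
qed

lemma convex_on_v_alpha:
  fixes \<Omega> :: "(real^'n) set"
  assumes cvx: "convex \<Omega>" and half: "\<Omega> \<subseteq> {x. 0 < x$k}"
    and margin: "\<And>x. x \<in> \<Omega> \<Longrightarrow>
      2*\<alpha>\<^sup>2 * sq_norm_except k x \<le> \<alpha>*(1-\<alpha>)*(C_alpha \<Omega> \<alpha> - sq_norm_except k x)"
  shows "convex_on \<Omega> (v_alpha \<Omega> k \<alpha>)"
proof (rule convex_onI[OF _ cvx])
  fix t :: real and x z assume t: "0 < t" "t < 1" and x: "x \<in> \<Omega>" and z: "z \<in> \<Omega>"
  define \<phi> where "\<phi> s = v_alpha \<Omega> k \<alpha> ((1 - s) *\<^sub>R x + s *\<^sub>R z)" for s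
  have seg: "(1 - s) *\<^sub>R x + s *\<^sub>R z \<in> \<Omega>" if "s \<in> {0..1}" for s
    using that by (intro convexD[OF cvx x z]) auto
  have comp: "((1 - s) *\<^sub>R x + s *\<^sub>R z) $ l = x$l + s*(z$l - x$l)" for s l
    by (simp add: algebra_simps)
  have "convex_on {0..1} (\<lambda>s. (x$k + s*(z$k - x$k)) powr \<alpha>
          * ((\<Sum>l\<in>UNIV-{k}. (x$l + s*(z$l - x$l))\<^sup>2) - C_alpha \<Omega> \<alpha>))"
  proof (rule convex_on_affine_powr_mult_sum_squares)
    fix s :: real assume s: "s \<in> {0..1}"
    have "0 < ((1 - s) *\<^sub>R x + s *\<^sub>R z) $ k" using half seg[OF s] by blast
    then show "0 < x$k + s*(z$k - x$k)" by (simp only: comp)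
    show "2*\<alpha>\<^sup>2 * (\<Sum>l\<in>UNIV-{k}. (x$l + s*(z$l - x$l))\<^sup>2)
        \<le> \<alpha>*(1-\<alpha>)*(C_alpha \<Omega> \<alpha> - (\<Sum>l\<in>UNIV-{k}. (x$l + s*(z$l - x$l))\<^sup>2))"
      using margin[OF seg[OF s]] by (simp only: comp)
  qed auto
  then have "convex_on {0..1} \<phi>"
    unfolding \<phi>_def[abs_def] v_alpha_def comp .
  then have "\<phi> ((1 - t) *\<^sub>R 0 + t *\<^sub>R 1) \<le> (1 - t) * \<phi> 0 + t * \<phi> 1"
    by (rule convex_onD_Icc) (use t in auto)
  then show "v_alpha \<Omega> k \<alpha> ((1 - t) *\<^sub>R x + t *\<^sub>R z) \<le> (1 - t) * v_alpha \<Omega> k \<alpha> x + t * v_alpha \<Omega> k \<alpha> z"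
    by (simp add: \<phi>_def)
qed

theorem lemma2p2:
  fixes \<Omega> :: "(real^'n) set" and k :: 'n
  assumes n2: "CARD('n) \<ge> 2"
    and dom: "open \<Omega>" "connected \<Omega>" "\<Omega> \<noteq> {}"
    and bdd: "bounded \<Omega>" and cvx: "convex \<Omega>"
    and bd0: "0 \<in> frontier \<Omega>"
    and half: "\<Omega> \<subseteq> {x. x $ k > 0}"
  shows "(\<forall>\<alpha>\<in>{0<..<1}.
            convex_on \<Omega> (v_alpha \<Omega> k \<alpha>)
          \<and> (\<forall>x\<in>frontier \<Omega>. v_alpha \<Omega> k \<alpha> x \<le> 0)
          \<and> (\<forall>x\<in>\<Omega>. det (hessian (v_alpha \<Omega> k \<alpha>) x)
                       \<ge> 2 * (x $ k) powr (real CARD('n) * \<alpha> - 2)))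
       \<and> (\<forall>p>0. \<forall>x\<in>\<Omega>.
            det (hessian (v_alpha \<Omega> k (2 / (real CARD('n) + p))) x)
              > \<bar>v_alpha \<Omega> k (2 / (real CARD('n) + p)) x\<bar> powr (- p))"
proof -
  have "0 \<in> closure \<Omega>" using bd0 by (simp add: frontier_def)
  have A: "0 \<le> sq_norm_except k x" "sq_norm_except k x \<le> (diameter \<Omega>)\<^sup>2" if "x \<in> closure \<Omega>" for x
    using sq_norm_except_le_diameter[OF bdd \<open>0 \<in> closure \<Omega>\<close> that] by (auto intro: sum_nonneg)
  have pos: "0 < x$k" if "x \<in> \<Omega>" for x using half that by auto
  have margin: "1 \<le> \<alpha>*(1-\<alpha>)*(C_alpha \<Omega> \<alpha> - sq_norm_except k x) - 2*\<alpha>\<^sup>2 * sq_norm_except k x"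
    and gap: "1 < C_alpha \<Omega> \<alpha> - sq_norm_except k x"
    if "0 < \<alpha>" "\<alpha> < 1" "x \<in> closure \<Omega>" for \<alpha> x
    using C_alpha_margin C_alpha_gap A[OF that(3)] that(1,2) by auto
  have det: "2 * (x$k) powr (real CARD('n) * \<alpha> - 2) \<le> det (hessian (v_alpha \<Omega> k \<alpha>) x)"
    if "0 < \<alpha>" "\<alpha> < 1" "x \<in> \<Omega>" for \<alpha> x
    using det_hessian_v_alpha_ge[OF n2 pos margin] that closure_subset by blast
  have "convex_on \<Omega> (v_alpha \<Omega> k \<alpha>)" if "0 < \<alpha>" "\<alpha> < 1" for \<alpha>
    using margin[OF that] closure_subset by (intro convex_on_v_alpha[OF cvx half]) force
  moreover have "v_alpha \<Omega> k \<alpha> x \<le> 0" if "0 < \<alpha>" "\<alpha> < 1" "x \<in> frontier \<Omega>" for \<alpha> x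
    using gap[OF that(1,2), of x] that(3) by (simp add: v_alpha_def frontier_def mult_nonneg_nonpos)
  moreover have "\<bar>v_alpha \<Omega> k \<alpha> x\<bar> powr (- p) < det (hessian (v_alpha \<Omega> k \<alpha>) x)"
    if "0 < p" "x \<in> \<Omega>" and \<alpha>: "\<alpha> = 2 / (real CARD('n) + p)" for p \<alpha> x
  proof -
    have "0 < \<alpha>" "\<alpha> < 1" using n2 \<open>0 < p\<close> by (auto simp: \<alpha>)
    then show ?thesis
      using abs_v_alpha_powr_less[OF \<open>0 < p\<close> pos gap \<alpha>] det that closure_subset
      by (smt (verit) subsetD powr_ge_zero)
  qed
  ultimately show ?thesis using det by auto
qed

end
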